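(* Let $a_*\in\mathbb{R}\setminus\{0\}$ and $f_*\in C^2([-1,1]\times(\mathbb{R}\setminus\{-a_*\}))$ be such that \[ \partial_yf_*(1,a)=\frac{1-i(a_*+a)}{2i(a_*+a)}f_*(1,a)\quad\text{for all }a\in\mathbb{R}\setminus\{-a_*\}. \] Then $\mathcal R(a_*+a,f_*(\cdot,a))\in Y$ for all $a\in\mathbb{R}\setminus\{-a_*\}$, and the map $a\mapsto \mathcal R(a_*+a,f_*(\cdot,a))$ from $\mathbb{R}\setminus\{-a_*\}$ to $Y$ is continuous.
   Context: $Y$ is the vector space of all $f\in C(-1,1)$ (complex valued) such that $y\mapsto(1+y)(1-y)^2f(y)$ extends to a continuous function on $[-1,1]$, with norm $\|f\|_Y:=\sup_{y\in(-1,1)}(1+y)(1-y)^2|f(y)|$. For $\alpha\in\mathbb{R}\setminus\{0\}$, $f\in C^2(-1,1)$ and $y\in(-1,1)$, \[ \mathcal R(\alpha,f)(y):=f''(y)+p_0(y,\alpha)f'(y)+q_0(y,\alpha)f(y)+\frac{f(y)|f(y)|^2}{(1-y)^2}, \] where \[ p_0(y,\alpha):=\frac{4i\alpha}{(1-y)^3}-\frac{2i\alpha}{(1-y)^2}-\frac{2+\frac{2i}{\alpha}}{1-y}+\frac{2}{1+y},\qquad q_0(y,\alpha):=-\frac{2-2i\alpha}{(1-y)^3}-\frac{\frac{1}{\alpha^2}-\frac{i}{\alpha}}{(1-y)^2}-\frac{1+\frac{i}{\alpha}}{1-y}-\frac{1+\frac{i}{\alpha}}{1+y}. \] Here $f_*(\cdot,a)$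 denotes $y\mapsto f_*(y,a)$. *)

theory Defs
  imports "HOL-Analysis.Analysis"
begin

definition wY :: "real \<Rightarrow> real" where
  "wY y = (1 + y) * (1 - y)^2"

definition in_Y :: "(real \<Rightarrow> complex) \<Rightarrow> bool" where
  "in_Y f \<longleftrightarrow> continuous_on {-1<..<1} f \<and>
     (\<exists>g. continuous_on {-1..1} g \<and> (\<forall>y\<in>{-1<..<1}. g y = of_real (wY y) * f y))"

definition normY :: "(real \<Rightarrow> complex) \<Rightarrow> real" where
  "normY f = (SUP y\<in>{-1<..<1}. wY y * cmod (f y))"

definition p0 :: "real \<Rightarrow> real \<Rightarrow> complex" where
  "p0 y \<alpha> = 4 * \<i> * of_real \<alpha> / of_real ((1 - y)^3)
           - 2 * \<i> * of_real \<alpha> / of_real ((1 - y)^2)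
           - (2 + 2 * \<i> / of_real \<alpha>) / of_real (1 - y)
           + 2 / of_real (1 + y)"

definition q0 :: "real \<Rightarrow> real \<Rightarrow> complex" where
  "q0 y \<alpha> = - (2 - 2 * \<i> * of_real \<alpha>) / of_real ((1 - y)^3)
           - (1 / of_real (\<alpha>^2) - \<i> / of_real \<alpha>) / of_real ((1 - y)^2)
           - (1 + \<i> / of_real \<alpha>) / of_real (1 - y)
           - (1 + \<i> / of_real \<alpha>) / of_real (1 + y)"

definition Rop :: "real \<Rightarrow> (real \<Rightarrow> complex) \<Rightarrow> real \<Rightarrow> complex" where
  "Rop \<alpha> f y =
     vector_derivative (\<lambda>t. vector_derivative f (at t)) (at y)
     + p0 y \<alpha> * vector_derivative f (at y)
     + q0 y \<alpha> * f y
     + f y * of_real ((cmod (f y))^2) / of_real ((1 - y)^2)"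

text \<open>C^2 on a (not necessarily open) set S of the plane: f is the restriction
  to S of a function that is twice continuously Frechet differentiable on an
  open neighbourhood of S.\<close>
definition C2_on :: "(real \<times> real) set \<Rightarrow> (real \<times> real \<Rightarrow> complex) \<Rightarrow> bool" where
  "C2_on S f \<longleftrightarrow>
     (\<exists>V g (Df :: real \<times> real \<Rightarrow> (real \<times> real) \<Rightarrow>\<^sub>L complex)
          (D2f :: real \<times> real \<Rightarrow> (real \<times> real) \<Rightarrow>\<^sub>L ((real \<times> real) \<Rightarrow>\<^sub>L complex)).
        open V \<and> S \<subseteq> V \<and> (\<forall>x\<in>S. g x = f x) \<and>
        (\<forall>x\<in>V. (g has_derivative blinfun_apply (Df x)) (at x)) \<and>
        (\<forall>x\<in>V. (Df has_derivative blinfun_apply (D2f x)) (at x)) \<and>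
        continuous_on V D2f)"

end

theory Submission
  imports Defs
begin

(* Multiplying R(alpha, f) by the weight (1 + y) (1 - y)^2 of Y leaves terms that are continuous on
   [-1,1] x (R - {-a_*}), except for (1 + y) / (1 - y) times the combination
   4 i alpha f' - (2 - 2 i alpha) f.  The boundary condition at y = 1 says exactly that this
   combination vanishes there, so by the mean value inequality its quotient by 1 - y extends
   continuously in (y, a), with value minus its y-derivative at y = 1.  The weighted operator is
   thus the restriction of a jointly continuous function W: this gives membership in Y, and the
   uniform continuity of W on [-1,1] x [a0 - delta, a0 + delta] gives continuity in the norm of Y. *)

lemma norm_increment_sub_linear_le:
  fixes f :: "real \<Rightarrow> 'b::real_normed_vector"
  assumes "y \<le> z"
    and "\<And>t. t \<in> {y..z} \<Longrightarrow> (f has_vector_derivative f' t) (at t within {y..z})"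
    and "\<And>t. t \<in> {y..z} \<Longrightarrow> norm (f' t - c) \<le> B"
  shows "norm (f z - f y - (z - y) *\<^sub>R c) \<le> B * (z - y)"
proof -
  have "norm ((f z - z *\<^sub>R c) - (f y - y *\<^sub>R c)) \<le> B * norm (z - y)"
  proof (rule differentiable_bound[of "{y..z}"])
    show "((\<lambda>t. f t - t *\<^sub>R c) has_derivative (\<lambda>h. h *\<^sub>R (f' t - c))) (at t within {y..z})"
      if "t \<in> {y..z}" for t
      using assms(2)[OF that] unfolding has_vector_derivative_def
      by (auto intro!: derivative_eq_intros simp: algebra_simps)
    show "onorm (\<lambda>h. h *\<^sub>R (f' t - c)) \<le> B" if "t \<in> {y..z}" for t
    proof (rule onorm_le)
      fix h :: real
      have "norm (h *\<^sub>R (f' t - c)) = norm (f' t - c) * norm h"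
        by simp
      also have "\<dots> \<le> B * norm h"
        using assms(3)[OF that] by (rule mult_right_mono) simp
      finally show "norm (h *\<^sub>R (f' t - c)) \<le> B * norm h" .
    qed
  qed (use assms(1) in auto)
  then show ?thesis
    using assms(1) by (simp add: algebra_simps)
qed

lemma norm_quotient_vanishing_at_endpoint_le:
  fixes k :: "real \<Rightarrow> 'b::real_normed_field"
  assumes "y < b" and "k b = 0"
    and "\<And>t. t \<in> {y..b} \<Longrightarrow> (k has_vector_derivative k' t) (at t within {y..b})"
    and "\<And>t. t \<in> {y..b} \<Longrightarrow> norm (k' t - c) \<le> B"
  shows "norm (k y / of_real (b - y) + c) \<le> B"
proof -
  have "k y / of_real (b - y) + c = - (k b - k y - (b - y) *\<^sub>R c) / of_real (b - y)"
    using assms(1,2) by (simp add: field_simps scaleR_conv_of_real)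
  moreover have "norm (k b - k y - (b - y) *\<^sub>R c) \<le> B * (b - y)"
    using assms(1,3,4) by (intro norm_increment_sub_linear_le) auto
  ultimately show ?thesis
    using assms(1) by (simp add: norm_divide divide_le_eq norm_minus_commute del: of_real_diff)
qed

definition endpoint_quotient ::
    "real \<Rightarrow> (real \<times> 'a \<Rightarrow> 'b::real_normed_field) \<Rightarrow> (real \<times> 'a \<Rightarrow> 'b) \<Rightarrow> real \<times> 'a \<Rightarrow> 'b" where
  "endpoint_quotient b k k' x = (if fst x = b then - k' (b, snd x) else k x / of_real (b - fst x))"

lemma continuous_within_endpoint_quotient_at_endpoint:
  fixes k k' :: "real \<times> 'a::metric_space \<Rightarrow> 'b::real_normed_field"
  assumes k': "continuous_on ({l..b} \<times> U) k'"
    and deriv: "\<And>t a. t \<in> {l..b} \<Longrightarrow> a \<in> U \<Longrightarrow>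
      ((\<lambda>s. k (s, a)) has_vector_derivative k' (t, a)) (at t within {l..b})"
    and vanish: "\<And>a. a \<in> U \<Longrightarrow> k (b, a) = 0"
    and b: "(b, a1) \<in> {l..b} \<times> U"
  shows "continuous (at (b, a1) within {l..b} \<times> U) (endpoint_quotient b k k')"
proof (unfold continuous_within_eps_delta, intro allI impI)
  fix e :: real assume "e > 0"
  then obtain d where "d > 0" and d: "\<And>x. x \<in> {l..b} \<times> U \<Longrightarrow> dist x (b, a1) < d \<Longrightarrow>
      dist (k' x) (k' (b, a1)) < e / 2"
    using k' b unfolding continuous_on_iff by (meson half_gt_zero)
  have "dist (endpoint_quotient b k k' (y, a)) (endpoint_quotient b k k' (b, a1)) < e"
    if ya: "(y, a) \<in> {l..b} \<times> U" "dist (y, a) (b, a1) < d" for y a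
  proof (cases "y = b")
    case True
    then show ?thesis
      using d[OF ya] \<open>e > 0\<close> by (simp add: endpoint_quotient_def dist_minus)
  next
    case False
    with ya have "y < b" "a \<in> U"
      by auto
    have "norm (k (y, a) / of_real (b - y) + k' (b, a1)) \<le> e / 2"
    proof (rule norm_quotient_vanishing_at_endpoint_le)
      fix t assume t: "t \<in> {y..b}"
      then show "((\<lambda>s. k (s, a)) has_vector_derivative k' (t, a)) (at t within {y..b})"
        using ya \<open>a \<in> U\<close> by (auto intro: has_vector_derivative_within_subset[OF deriv])
      have "dist (t, a) (b, a1) \<le> dist (y, a) (b, a1)"
        using t by (auto simp: dist_Pair_Pair dist_real_def intro!: power_mono)
      then show "norm (k' (t, a) - k' (b, a1)) \<le> e / 2"
        using d[of "(t, a)"] t ya \<open>a \<in> U\<close> by (auto simp: dist_norm)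
    qed (use \<open>y < b\<close> vanish \<open>a \<in> U\<close> in auto)
    then show ?thesis
      using \<open>y < b\<close> \<open>e > 0\<close> by (simp add: endpoint_quotient_def dist_norm)
  qed
  then show "\<exists>d>0. \<forall>x\<in>{l..b} \<times> U. dist x (b, a1) < d \<longrightarrow>
      dist (endpoint_quotient b k k' x) (endpoint_quotient b k k' (b, a1)) < e"
    using \<open>d > 0\<close> by auto
qed

lemma continuous_on_endpoint_quotient:
  fixes k k' :: "real \<times> 'a::metric_space \<Rightarrow> 'b::real_normed_field"
  assumes k: "continuous_on ({l..b} \<times> U) k" and k': "continuous_on ({l..b} \<times> U) k'"
    and deriv: "\<And>t a. t \<in> {l..b} \<Longrightarrow> a \<in> U \<Longrightarrow>
      ((\<lambda>s. k (s, a)) has_vector_derivative k' (t, a)) (at t within {l..b})"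
    and vanish: "\<And>a. a \<in> U \<Longrightarrow> k (b, a) = 0"
  shows "continuous_on ({l..b} \<times> U) (endpoint_quotient b k k')"
  unfolding continuous_on_eq_continuous_within
proof
  fix p assume p: "p \<in> {l..b} \<times> U"
  show "continuous (at p within {l..b} \<times> U) (endpoint_quotient b k k')"
  proof (cases "fst p = b")
    case True
    then show ?thesis
      using continuous_within_endpoint_quotient_at_endpoint[OF k' deriv vanish] p
      by (metis prod.collapse)
  next
    case False
    with p have "fst p < b"
      by auto
    have "continuous (at p within {l..b} \<times> U) (\<lambda>x. k x / of_real (b - fst x))"
      using k p \<open>fst p < b\<close> by (intro continuous_intros)
        (auto simp: continuous_on_eq_continuous_within)
    then show ?thesis
    proof (rule continuous_transform_within[where \<delta> = "b - fst p"])
      fix x assume "dist x p < b - fst p"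
      then have "fst x \<noteq> b"
        using dist_fst_le[of x p] by (auto simp: dist_real_def)
      then show "k x / of_real (b - fst x) = endpoint_quotient b k k' x"
        by (simp add: endpoint_quotient_def)
    qed (use p \<open>fst p < b\<close> in auto)
  qed
qed

lemma has_vector_derivative_partial_fst:
  fixes G :: "real \<times> 'a::real_normed_vector \<Rightarrow> 'b::real_normed_vector"
  assumes "(G has_derivative blinfun_apply D) (at (t, c))"
  shows "((\<lambda>s. G (s, c)) has_vector_derivative blinfun_apply D (1, 0)) (at t)"
proof -
  have "((\<lambda>s. (s, c)) has_derivative (\<lambda>h. (h, 0))) (at t)"
    by (auto intro!: derivative_eq_intros)
  from diff_chain_at[OF this assms]
  have "((\<lambda>s. G (s, c)) has_derivative (\<lambda>h. blinfun_apply D (h, 0))) (at t)"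
    by (simp add: comp_def)
  moreover have "(\<lambda>h. blinfun_apply D (h, 0)) = (\<lambda>h. h *\<^sub>R blinfun_apply D (1, 0))"
  proof
    fix h :: real
    have "(h, 0) = h *\<^sub>R (1, 0 :: 'a)"
      by simp
    then show "blinfun_apply D (h, 0) = h *\<^sub>R blinfun_apply D (1, 0)"
      by (metis blinfun.scaleR_right)
  qed
  ultimately show ?thesis
    by (simp add: has_vector_derivative_def)
qed

lemma C2_on_imp_partials_fst:
  assumes "C2_on S f"
  obtains g g1 g11 where "\<And>x. x \<in> S \<Longrightarrow> g x = f x"
    "continuous_on S g" "continuous_on S g1" "continuous_on S g11"
    "\<And>t a. (t, a) \<in> S \<Longrightarrow> ((\<lambda>s. g (s, a)) has_vector_derivative g1 (t, a)) (at t)"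
    "\<And>t a. (t, a) \<in> S \<Longrightarrow> ((\<lambda>s. g1 (s, a)) has_vector_derivative g11 (t, a)) (at t)"
proof -
  obtain V g and Df :: "real \<times> real \<Rightarrow> (real \<times> real) \<Rightarrow>\<^sub>L complex"
     and D2f :: "real \<times> real \<Rightarrow> (real \<times> real) \<Rightarrow>\<^sub>L ((real \<times> real) \<Rightarrow>\<^sub>L complex)"
    where "S \<subseteq> V" and g: "\<And>x. x \<in> S \<Longrightarrow> g x = f x"
      and dg: "\<And>x. x \<in> V \<Longrightarrow> (g has_derivative blinfun_apply (Df x)) (at x)"
      and dDf: "\<And>x. x \<in> V \<Longrightarrow> (Df has_derivative blinfun_apply (D2f x)) (at x)"
      and cD2f: "continuous_on V D2f"
    using assms unfolding C2_on_def by metis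
  define g1 where "g1 x = blinfun_apply (Df x) (1, 0)" for x
  define g11 where "g11 x = blinfun_apply (blinfun_apply (D2f x) (1, 0)) (1, 0)" for x
  have "continuous_on V g"
    using dg has_derivative_continuous by (metis continuous_at_imp_continuous_on)
  moreover have "continuous_on V g1"
  proof -
    have "continuous_on V Df"
      using dDf has_derivative_continuous by (metis continuous_at_imp_continuous_on)
    then show ?thesis
      unfolding g1_def by (intro continuous_intros)
  qed
  moreover have "continuous_on V g11"
    unfolding g11_def by (intro continuous_intros cD2f)
  ultimately have "continuous_on S g" "continuous_on S g1" "continuous_on S g11"
    using \<open>S \<subseteq> V\<close> by (auto intro: continuous_on_subset)
  moreover have "((\<lambda>s. g (s, a)) has_vector_derivative g1 (t, a)) (at t)" if "(t, a) \<in> S" for t a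
    unfolding g1_def using dg that \<open>S \<subseteq> V\<close> by (auto intro: has_vector_derivative_partial_fst)
  moreover have "((\<lambda>s. g1 (s, a)) has_vector_derivative g11 (t, a)) (at t)" if "(t, a) \<in> S" for t a
  proof -
    have "((\<lambda>s. Df (s, a)) has_vector_derivative blinfun_apply (D2f (t, a)) (1, 0)) (at t)"
      using dDf that \<open>S \<subseteq> V\<close> by (auto intro: has_vector_derivative_partial_fst)
    from bounded_linear.has_vector_derivative[OF blinfun.bounded_linear_left this]
    show ?thesis
      unfolding g1_def g11_def .
  qed
  ultimately show ?thesis
    using that[OF g] by blast
qed

definition p0_regular :: "real \<Rightarrow> real \<Rightarrow> complex" where
  "p0_regular y \<alpha> = - 2 * \<i> * of_real \<alpha> * of_real (1 + y)
     - (2 + 2 * \<i> / of_real \<alpha>) * of_real ((1 + y) * (1 - y)) + 2 * of_real ((1 - y)^2)"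

definition q0_regular :: "real \<Rightarrow> real \<Rightarrow> complex" where
  "q0_regular y \<alpha> = - (1 / of_real (\<alpha>^2) - \<i> / of_real \<alpha>) * of_real (1 + y)
     - (1 + \<i> / of_real \<alpha>) * of_real ((1 + y) * (1 - y))
     - (1 + \<i> / of_real \<alpha>) * of_real ((1 - y)^2)"

definition singular_part :: "real \<Rightarrow> complex \<Rightarrow> complex \<Rightarrow> complex" where
  "singular_part \<alpha> v d = 4 * \<i> * of_real \<alpha> * d - (2 - 2 * \<i> * of_real \<alpha>) * v"

lemma wY_mult_p0:
  assumes "y \<in> {-1<..<1}"
  shows "of_real (wY y) * p0 y \<alpha> = 4 * \<i> * of_real \<alpha> * of_real (1 + y) / of_real (1 - y) + p0_regular y \<alpha>"
proof -
  define D E where "D = complex_of_real (1 - y)" and "E = complex_of_real (1 + y)"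
  have "D \<noteq> 0" "E \<noteq> 0"
    using assms unfolding D_def E_def of_real_eq_0_iff by auto
  have "of_real (wY y) * p0 y \<alpha>
      = E * D^2 * (4 * \<i> * of_real \<alpha> / D^3 - 2 * \<i> * of_real \<alpha> / D^2 - (2 + 2 * \<i> / of_real \<alpha>) / D + 2 / E)"
    by (simp add: wY_def p0_def D_def E_def)
  also have "\<dots> = 4 * \<i> * of_real \<alpha> * E / D
      + (- 2 * \<i> * of_real \<alpha> * E - (2 + 2 * \<i> / of_real \<alpha>) * (E * D) + 2 * D^2)"
    using \<open>D \<noteq> 0\<close> \<open>E \<noteq> 0\<close> by (simp add: field_simps power2_eq_square power3_eq_cube)
  finally show ?thesis
    by (simp add: p0_regular_def D_def E_def)
qed

lemma wY_mult_q0: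
  assumes "y \<in> {-1<..<1}"
  shows "of_real (wY y) * q0 y \<alpha> = - (2 - 2 * \<i> * of_real \<alpha>) * of_real (1 + y) / of_real (1 - y) + q0_regular y \<alpha>"
proof -
  define D E where "D = complex_of_real (1 - y)" and "E = complex_of_real (1 + y)"
  have "D \<noteq> 0" "E \<noteq> 0"
    using assms unfolding D_def E_def of_real_eq_0_iff by auto
  have "of_real (wY y) * q0 y \<alpha>
      = E * D^2 * (- (2 - 2 * \<i> * of_real \<alpha>) / D^3 - (1 / of_real (\<alpha>^2) - \<i> / of_real \<alpha>) / D^2
          - (1 + \<i> / of_real \<alpha>) / D - (1 + \<i> / of_real \<alpha>) / E)"
    by (simp add: wY_def q0_def D_def E_def)
  also have "\<dots> = - (2 - 2 * \<i> * of_real \<alpha>) * E / D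
      + (- (1 / of_real (\<alpha>^2) - \<i> / of_real \<alpha>) * E - (1 + \<i> / of_real \<alpha>) * (E * D)
         - (1 + \<i> / of_real \<alpha>) * D^2)"
    using \<open>D \<noteq> 0\<close> \<open>E \<noteq> 0\<close> by (simp add: field_simps power2_eq_square power3_eq_cube)
  finally show ?thesis
    by (simp add: q0_regular_def D_def E_def)
qed

lemma wY_mult_operator:
  assumes "y \<in> {-1<..<1}"
  shows "of_real (wY y) * (F2 + p0 y \<alpha> * F1 + q0 y \<alpha> * F + F * of_real ((cmod F)^2) / of_real ((1 - y)^2))
    = of_real (wY y) * F2 + p0_regular y \<alpha> * F1 + q0_regular y \<alpha> * F
      + of_real (1 + y) * (singular_part \<alpha> F F1 / of_real (1 - y))
      + of_real (1 + y) * (F * of_real ((cmod F)^2))"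
proof -
  have N: "of_real (wY y) * (F * of_real ((cmod F)^2) / of_real ((1 - y)^2))
      = of_real (1 + y) * (F * of_real ((cmod F)^2))"
    using assms by (simp add: wY_def)
  have "complex_of_real (1 - y) \<noteq> 0"
    using assms by simp
  have "of_real (wY y) * (F2 + p0 y \<alpha> * F1 + q0 y \<alpha> * F + F * of_real ((cmod F)^2) / of_real ((1 - y)^2))
      = of_real (wY y) * F2 + (of_real (wY y) * p0 y \<alpha>) * F1 + (of_real (wY y) * q0 y \<alpha>) * F
        + of_real (wY y) * (F * of_real ((cmod F)^2) / of_real ((1 - y)^2))"
    by (simp add: algebra_simps)
  also have "\<dots> = of_real (wY y) * F2
      + (4 * \<i> * of_real \<alpha> * of_real (1 + y) / of_real (1 - y) + p0_regular y \<alpha>) * F1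
      + (- (2 - 2 * \<i> * of_real \<alpha>) * of_real (1 + y) / of_real (1 - y) + q0_regular y \<alpha>) * F
      + of_real (1 + y) * (F * of_real ((cmod F)^2))"
    unfolding wY_mult_p0[OF assms] wY_mult_q0[OF assms] N ..
  also have "\<dots> = of_real (wY y) * F2 + p0_regular y \<alpha> * F1 + q0_regular y \<alpha> * F
      + of_real (1 + y) * (singular_part \<alpha> F F1 / of_real (1 - y))
      + of_real (1 + y) * (F * of_real ((cmod F)^2))"
    using \<open>complex_of_real (1 - y) \<noteq> 0\<close> by (simp add: singular_part_def field_simps del: of_real_diff)
  finally show ?thesis .
qed

lemma Rop_eq:
  assumes "open I" and "y \<in> I"
    and "\<And>t. t \<in> I \<Longrightarrow> (f has_vector_derivative f1 t) (at t)"
    and "(f1 has_vector_derivative f2) (at y)"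
  shows "Rop \<alpha> f y = f2 + p0 y \<alpha> * f1 y + q0 y \<alpha> * f y
    + f y * of_real ((cmod (f y))^2) / of_real ((1 - y)^2)"
proof -
  have vd: "vector_derivative f (at t) = f1 t" if "t \<in> I" for t
    using assms(3)[OF that] by (rule vector_derivative_at)
  then have "((\<lambda>t. vector_derivative f (at t)) has_vector_derivative f2) (at y)"
    using has_vector_derivative_transform_within_open[OF assms(4) assms(1,2)] by simp
  then show ?thesis
    unfolding Rop_def using vd[OF \<open>y \<in> I\<close>] by (simp add: vector_derivative_at)
qed

lemma wY_mult_Rop_eq:
  assumes "y \<in> {-1<..<1}"
    and "\<And>t. t \<in> {-1<..<1} \<Longrightarrow> (f has_vector_derivative f1 t) (at t)"
    and "(f1 has_vector_derivative f2) (at y)"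
  shows "of_real (wY y) * Rop \<alpha> f y
    = of_real (wY y) * f2 + p0_regular y \<alpha> * f1 y + q0_regular y \<alpha> * f y
      + of_real (1 + y) * (singular_part \<alpha> (f y) (f1 y) / of_real (1 - y))
      + of_real (1 + y) * (f y * of_real ((cmod (f y))^2))"
  by (simp only: Rop_eq[OF open_greaterThanLessThan assms] wY_mult_operator[OF assms(1)])

lemma singular_part_vanishes_at_1:
  assumes "\<alpha> \<noteq> 0"
    and "(f has_vector_derivative (1 - \<i> * of_real \<alpha>) / (2 * \<i> * of_real \<alpha>) * f 1) (at 1 within {-1..1})"
    and "(g has_vector_derivative d) (at 1)" and "\<And>y. y \<in> {-1..1} \<Longrightarrow> g y = f y"
  shows "singular_part \<alpha> (g 1) d = 0"
proof -
  have "(f has_vector_derivative d) (at 1 within {-1..1})"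
    using has_vector_derivative_at_within[OF assms(3)]
    by (rule has_vector_derivative_transform_within[where d = 1]) (use assms(4) in auto)
  with assms(2) have "d = (1 - \<i> * of_real \<alpha>) / (2 * \<i> * of_real \<alpha>) * g 1"
    using assms(4) by (intro vector_derivative_unique_within_closed_interval[of "-1" 1 1]) auto
  then have "2 * \<i> * of_real \<alpha> * d = (1 - \<i> * of_real \<alpha>) * g 1"
    using assms(1) by (simp add: field_simps)
  moreover have "singular_part \<alpha> (g 1) d = 2 * (2 * \<i> * of_real \<alpha> * d - (1 - \<i> * of_real \<alpha>) * g 1)"
    by (simp add: singular_part_def algebra_simps)
  ultimately show ?thesis
    by simp
qed

lemma wY_pos: "y \<in> {-1<..<1} \<Longrightarrow> wY y > 0"
  by (simp add: wY_def)

lemma in_Y_if_weighted_continuous: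
  assumes "continuous_on {-1..1} G" and "\<And>y. y \<in> {-1<..<1} \<Longrightarrow> G y = of_real (wY y) * f y"
  shows "in_Y f"
  unfolding in_Y_def
proof
  have "continuous_on {-1<..<1} (\<lambda>y. G y / of_real (wY y))"
    using wY_pos unfolding wY_def
    by (intro continuous_intros continuous_on_subset[OF assms(1)]) (auto simp del: of_real_mult)
  then show "continuous_on {-1<..<1} f"
    by (rule continuous_on_eq) (use assms(2) wY_pos in \<open>fastforce simp: field_simps\<close>)
  show "\<exists>G. continuous_on {-1..1} G \<and> (\<forall>y\<in>{-1<..<1}. G y = of_real (wY y) * f y)"
    using assms by blast
qed

lemma abs_normY_le:
  assumes "\<And>y. y \<in> {-1<..<1} \<Longrightarrow> wY y * cmod (f y) \<le> B"
  shows "\<bar>normY f\<bar> \<le> B"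
proof -
  have "normY f \<le> B"
    unfolding normY_def using assms by (intro cSUP_least) auto
  moreover have "0 \<le> wY 0 * cmod (f 0)"
    by (simp add: wY_def)
  moreover have "wY 0 * cmod (f 0) \<le> normY f"
    unfolding normY_def using assms by (intro cSUP_upper bdd_aboveI2) auto
  ultimately show ?thesis
    by simp
qed

lemma tendsto_normY_if_weighted_continuous:
  fixes W :: "real \<times> 'a::heine_borel \<Rightarrow> complex"
  assumes "open U" and "a0 \<in> U" and W: "continuous_on ({-1..1} \<times> U) W"
    and F: "\<And>a y. a \<in> U \<Longrightarrow> y \<in> {-1<..<1} \<Longrightarrow> of_real (wY y) * F a y = W (y, a)"
  shows "((\<lambda>a. normY (\<lambda>y. F a y - F a0 y)) \<longlongrightarrow> 0) (at a0 within U)"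
proof -
  obtain \<delta> where "\<delta> > 0" and "cball a0 \<delta> \<subseteq> U"
    using assms(1,2) open_contains_cball by blast
  define K where "K = {-1..1::real} \<times> cball a0 \<delta>"
  have "uniformly_continuous_on K W"
    unfolding K_def using \<open>cball a0 \<delta> \<subseteq> U\<close>
    by (intro compact_uniformly_continuous continuous_on_subset[OF W] compact_Times) auto
  show ?thesis
    unfolding Lim_within
  proof (intro allI impI)
    fix e :: real assume "e > 0"
    then obtain d where "d > 0" and d: "\<And>x x'. x \<in> K \<Longrightarrow> x' \<in> K \<Longrightarrow> dist x' x < d \<Longrightarrow> dist (W x') (W x) < e / 2"
      using \<open>uniformly_continuous_on K W\<close> unfolding uniformly_continuous_on_def by (meson half_gt_zero)
    have "\<bar>normY (\<lambda>y. F a y - F a0 y)\<bar> \<le> e / 2" if "a \<in> U" and "dist a a0 < min d \<delta>" for a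
    proof (rule abs_normY_le)
      fix y :: real assume y: "y \<in> {-1<..<1}"
      have "wY y * cmod (F a y - F a0 y) = cmod (of_real (wY y) * F a y - of_real (wY y) * F a0 y)"
        using wY_pos[OF y] by (simp add: norm_mult right_diff_distrib[symmetric])
      also have "\<dots> = dist (W (y, a)) (W (y, a0))"
        using F[OF that(1) y] F[OF assms(2) y] by (simp add: dist_norm)
      also have "\<dots> < e / 2"
        using that y \<open>\<delta> > 0\<close> by (intro d) (auto simp: K_def dist_commute dist_Pair_Pair)
      finally show "wY y * cmod (F a y - F a0 y) \<le> e / 2"
        by simp
    qed
    then show "\<exists>d>0. \<forall>a\<in>U. 0 < dist a a0 \<and> dist a a0 < d \<longrightarrow> dist (normY (\<lambda>y. F a y - F a0 y)) 0 < e"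
      using \<open>d > 0\<close> \<open>\<delta> > 0\<close> \<open>e > 0\<close>
      by (intro exI[of _ "min d \<delta>"]) (fastforce simp: dist_real_def)
  qed
qed

lemma wY_mult_Rop_continuous_extension:
  fixes astar :: real and fstar :: "real \<times> real \<Rightarrow> complex"
  assumes \<alpha>: "\<And>a. a \<in> U \<Longrightarrow> astar + a \<noteq> 0"
    and C2: "C2_on ({-1..1} \<times> U) fstar"
    and bc: "\<And>a. a \<in> U \<Longrightarrow> ((\<lambda>y. fstar (y, a)) has_vector_derivative
      ((1 - \<i> * of_real (astar + a)) / (2 * \<i> * of_real (astar + a)) * fstar (1, a)))
        (at 1 within {-1..1})"
  obtains W where "continuous_on ({-1..1} \<times> U) W"
    and "\<And>a y. a \<in> U \<Longrightarrow> y \<in> {-1<..<1} \<Longrightarrow>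
      of_real (wY y) * Rop (astar + a) (\<lambda>y. fstar (y, a)) y = W (y, a)"
proof -
  define S where "S = {-1..1::real} \<times> U"
  obtain g g1 g11 where g: "\<And>x. x \<in> S \<Longrightarrow> g x = fstar x"
    and cont: "continuous_on S g" "continuous_on S g1" "continuous_on S g11"
    and d1: "\<And>t a. (t, a) \<in> S \<Longrightarrow> ((\<lambda>s. g (s, a)) has_vector_derivative g1 (t, a)) (at t)"
    and d2: "\<And>t a. (t, a) \<in> S \<Longrightarrow> ((\<lambda>s. g1 (s, a)) has_vector_derivative g11 (t, a)) (at t)"
    by (rule C2_on_imp_partials_fst[OF C2[folded S_def]]) (rule that)
  define h where "h x = singular_part (astar + snd x) (g x) (g1 x)" for x
  define h' where "h' x = singular_part (astar + snd x) (g1 x) (g11 x)" for x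
  define W where "W x = of_real (wY (fst x)) * g11 x + p0_regular (fst x) (astar + snd x) * g1 x
      + q0_regular (fst x) (astar + snd x) * g x + of_real (1 + fst x) * endpoint_quotient 1 h h' x
      + of_real (1 + fst x) * (g x * of_real ((cmod (g x))^2))" for x
  have "continuous_on S (endpoint_quotient 1 h h')"
    unfolding S_def
  proof (rule continuous_on_endpoint_quotient)
    show "continuous_on ({-1..1} \<times> U) h" "continuous_on ({-1..1} \<times> U) h'"
      using cont unfolding h_def h'_def singular_part_def S_def by (auto intro!: continuous_intros)
    show "((\<lambda>s. h (s, a)) has_vector_derivative h' (t, a)) (at t within {-1..1})"
      if "t \<in> {-1..1}" "a \<in> U" for t a
      unfolding h_def h'_def singular_part_def snd_conv using that
      by (intro has_vector_derivative_at_within[OF has_vector_derivative_diff]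
          has_vector_derivative_mult_right d1 d2) (auto simp: S_def)
    show "h (1, a) = 0" if "a \<in> U" for a
    proof -
      have "(1, a) \<in> S" and "\<And>y. y \<in> {-1..1} \<Longrightarrow> g (y, a) = fstar (y, a)"
        using that g by (auto simp: S_def)
      then show ?thesis
        unfolding h_def snd_conv by (intro singular_part_vanishes_at_1[OF \<alpha>[OF that] bc[OF that] d1])
    qed
  qed
  then have "continuous_on S W"
    using cont \<alpha> unfolding W_def wY_def p0_regular_def q0_regular_def S_def
    by (auto intro!: continuous_intros simp del: of_real_add)
  moreover have "of_real (wY y) * Rop (astar + a) (\<lambda>y. fstar (y, a)) y = W (y, a)"
    if a: "a \<in> U" and y: "y \<in> {-1<..<1}" for a y
  proof -
    have S: "(t, a) \<in> S" and fstar: "fstar (t, a) = g (t, a)" if "t \<in> {-1<..<1}" for t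
      using that a g by (auto simp: S_def)
    have "((\<lambda>y. fstar (y, a)) has_vector_derivative g1 (t, a)) (at t)" if "t \<in> {-1<..<1}" for t
      using d1[OF S[OF that]] open_greaterThanLessThan that
      by (rule has_vector_derivative_transform_within_open) (simp add: fstar)
    from wY_mult_Rop_eq[OF y this d2[OF S[OF y]]] show ?thesis
      using y by (simp add: W_def endpoint_quotient_def h_def fstar[OF y])
  qed
  ultimately show ?thesis
    using that unfolding S_def by blast
qed

theorem lemma3p5:
  fixes astar :: real and fstar :: "real \<times> real \<Rightarrow> complex"
  assumes astar_nz: "astar \<noteq> 0"
    and C2: "C2_on ({-1..1} \<times> (UNIV - {-astar})) fstar"
    and bc: "\<forall>a. a \<noteq> -astar \<longrightarrow>
       ((\<lambda>y. fstar (y, a)) has_vector_derivative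
          ((1 - \<i> * of_real (astar + a)) / (2 * \<i> * of_real (astar + a)) * fstar (1, a)))
         (at 1 within {-1..1})"
  shows "(\<forall>a. a \<noteq> -astar \<longrightarrow> in_Y (Rop (astar + a) (\<lambda>y. fstar (y, a))))
    \<and> (\<forall>a0. a0 \<noteq> -astar \<longrightarrow>
         ((\<lambda>a. normY (\<lambda>y. Rop (astar + a) (\<lambda>y. fstar (y, a)) y
                          - Rop (astar + a0) (\<lambda>y. fstar (y, a0)) y)) \<longlongrightarrow> 0)
           (at a0 within (UNIV - {-astar})))"
proof -
  define U where "U = UNIV - {-astar}"
  obtain W where W: "continuous_on ({-1..1} \<times> U) W"
    and wR: "\<And>a y. a \<in> U \<Longrightarrow> y \<in> {-1<..<1} \<Longrightarrow>
      of_real (wY y) * Rop (astar + a) (\<lambda>y. fstar (y, a)) y = W (y, a)"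
    by (rule wY_mult_Rop_continuous_extension[of U astar fstar]) (use C2 bc in \<open>auto simp: U_def\<close>)
  have "in_Y (Rop (astar + a) (\<lambda>y. fstar (y, a)))" if "a \<in> U" for a
  proof (rule in_Y_if_weighted_continuous)
    show "continuous_on {-1..1} (\<lambda>y. W (y, a))"
      using that by (intro continuous_on_compose2[OF W] continuous_intros) auto
  qed (use wR that in auto)
  moreover have "((\<lambda>a. normY (\<lambda>y. Rop (astar + a) (\<lambda>y. fstar (y, a)) y
      - Rop (astar + a0) (\<lambda>y. fstar (y, a0)) y)) \<longlongrightarrow> 0) (at a0 within U)" if "a0 \<in> U" for a0
    using W wR that by (intro tendsto_normY_if_weighted_continuous) (auto simp: U_def)
  ultimately show ?thesis
    unfolding U_def by blast
qed

end
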